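(* Let $(\ell_n)$, $(\sigma_{n,0})$, $(\sigma_{n,1})$, $(\sigma_{n,-1})$ ($n\in\mathbb N$) be sequences of strictly positive reals and $(\kappa_n)_{n\in\mathbb N}$ a sequence of reals. Put $\sigma_n=\max(\sigma_{n,-1},\sigma_{n,1})$ and assume $\sigma_n\le\sigma_{n,0}$ and $\kappa_n\ge0$ for all $n\in\mathbb N$, and $$\liminf_{n\to\infty}\frac{\ell_n}{n^2\sigma_{n,0}}=0 .$$ Let $x_0\in\mathbb R$ satisfy $\sigma_{1,-1}x_0\ge-\kappa_1$ (e.g. $x_0=0$). Then there exists a unique $x_1>0$ such that the sequence $(x_n)_{n\in\mathbb N}$ satisfying $$\ell_n = x_n\big(\sigma_{n,1}x_{n+1}+\sigma_{n,0}x_n+\sigma_{n,-1}x_{n-1}\big)+\kappa_n x_n,\qquad n\in\mathbb N,$$ is positive (i.e. $x_n>0$ for all $n\in\mathbb N$).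
   Context: $\mathbb N=\{1,2,3,\dots\}$. Since $\sigma_{n,1}>0$, the equation determines $x_{n+1}$ from $x_{n-1}$ and $x_n\ne0$, so the sequence is determined by $x_0$ and $x_1$ as long as no $x_n$ ($n\ge1$) vanishes. *)

theory Defs
  imports Complex_Main "HOL-Library.Extended_Real" "HOL-Library.Liminf_Limsup"
begin

end

theory Submission
  imports Defs "HOL-Analysis.Analysis"
begin

(*
  Existence is a shooting argument in the parameter t = x_1. Inductively one finds nested open
  intervals of parameters on which x_1, ..., x_n > 0, x_n tends to 0 at one end and x_(n+1) is
  negative near the other end. As x_n -> 0+ forces x_(n+1) -> +oo, the zero of x_(n+1) closest to
  that end cuts out the next interval, whose vanishing end is the opposite one. The ends
  alternate, so the intervals shrink from both sides and contain a common parameter, which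
  yields a positive solution.

  Uniqueness: every positive solution satisfies sigma_(n,0) x_n^2 <= l_n. For two positive
  solutions x, y the alternating difference e_n = (-1)^(n+1) (y_n - x_n) has nondecreasing
  increments, so e_n >= n (y_1 - x_1). As |y_n - x_n| <= max x_n y_n, this gives
  (y_1 - x_1)^2 <= l_n / (n^2 sigma_(n,0)) for all n, and the liminf hypothesis forces y_1 = x_1.
*)

lemma first_zero_left:
  fixes g :: "real \<Rightarrow> real"
  assumes ab: "a < b" and cont: "continuous_on {a<..<b} g"
    and pos: "eventually (\<lambda>t. g t > 0) (at_right a)"
    and neg: "eventually (\<lambda>t. g t < 0) (at_left b)"
  shows "\<exists>z\<in>{a<..<b}. g z = 0 \<and> (\<forall>t\<in>{a<..<z}. g t > 0)"
proof -
  obtain c where c: "a < c" "\<And>t. a < t \<Longrightarrow> t < c \<Longrightarrow> g t > 0"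
    using pos unfolding eventually_at_right_field by blast
  obtain d where d: "d < b" "\<And>t. d < t \<Longrightarrow> t < b \<Longrightarrow> g t < 0"
    using neg unfolding eventually_at_left_field by blast
  define p where "p = (a + min c b) / 2"
  define q where "q = (max d p + b) / 2"
  have pq: "a < p" "p < c" "p < q" "q < b" "d < q"
    using ab c(1) d(1) unfolding p_def q_def by (auto simp: min_def max_def field_simps)
  have gp: "g p > 0" and gq: "g q < 0"
    using c(2)[of p] d(2)[of q] pq by auto
  have cont_pq: "continuous_on {p..q} g"
    using cont by (rule continuous_on_subset) (use pq in auto)
  define S where "S = {p..q} \<inter> g -` {..0}"
  have "closed S"
    unfolding S_def by (rule continuous_closed_preimage[OF cont_pq]) auto
  moreover have "q \<in> S"
    using pq gq unfolding S_def by auto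
  moreover have "bdd_below S"
    unfolding S_def by (rule bdd_belowI[of _ p]) auto
  ultimately have z: "Inf S \<in> S" and z_le: "\<And>t. t \<in> S \<Longrightarrow> Inf S \<le> t"
    using closed_contains_Inf cInf_lower by blast+
  define z where "z = Inf S"
  have "p < z" "z \<le> q" "g z \<le> 0"
    using z gp unfolding z_def S_def by (auto simp: order.order_iff_strict)
  have "\<exists>u\<ge>p. u \<le> z \<and> g u = 0"
    by (rule IVT2') (use \<open>g z \<le> 0\<close> gp \<open>p < z\<close> \<open>z \<le> q\<close> in
        \<open>auto intro: continuous_on_subset[OF cont_pq]\<close>)
  then obtain u where u: "p \<le> u" "u \<le> z" "g u = 0" by blast
  with \<open>z \<le> q\<close> have "u \<in> S" unfolding S_def by auto
  with u z_le have "g z = 0" unfolding z_def by force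
  moreover have "g t > 0" if "a < t" "t < z" for t
  proof (cases "t < c")
    case False
    with pq that \<open>z \<le> q\<close> have "t \<in> {p..q}" by auto
    moreover have "t \<notin> S" using z_le[of t] that unfolding z_def by auto
    ultimately show ?thesis unfolding S_def by auto
  qed (use c(2) that in auto)
  ultimately show ?thesis
    using pq \<open>p < z\<close> \<open>z \<le> q\<close> by (intro bexI[of _ z]) auto
qed

lemma last_zero_right:
  fixes g :: "real \<Rightarrow> real"
  assumes ab: "a < b" and cont: "continuous_on {a<..<b} g"
    and neg: "eventually (\<lambda>t. g t < 0) (at_right a)"
    and pos: "eventually (\<lambda>t. g t > 0) (at_left b)"
  shows "\<exists>z\<in>{a<..<b}. g z = 0 \<and> (\<forall>t\<in>{z<..<b}. g t > 0)"
proof -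
  have "continuous_on {-b<..<-a} (\<lambda>t. g (- t))"
    by (rule continuous_on_compose2[OF cont]) (auto intro: continuous_intros)
  moreover have "eventually (\<lambda>t. g (- t) > 0) (at_right (- b))"
    using pos by (simp add: at_left_minus eventually_filtermap)
  moreover have "eventually (\<lambda>t. g (- t) < 0) (at_left (- a))"
    using neg by (simp add: at_right_minus eventually_filtermap)
  ultimately obtain z where z: "z \<in> {-b<..<-a}" "g (- z) = 0" "\<And>t. t \<in> {-b<..<z} \<Longrightarrow> g (- t) > 0"
    using first_zero_left[of "- b" "- a" "\<lambda>t. g (- t)"] ab by auto
  have "g t > 0" if "t \<in> {-z<..<b}" for t
    using z(3)[of "- t"] that by auto
  with z(1,2) show ?thesis
    by (intro bexI[of _ "- z"]) auto
qed

lemma nested_intervals_strict: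
  fixes a b :: "nat \<Rightarrow> real"
  assumes "incseq a" "decseq b" "\<And>k. a k < b k"
    and "\<And>k. a k < a (Suc (Suc k))" "\<And>k. b (Suc (Suc k)) < b k"
  shows "\<exists>t. \<forall>k. t \<in> {a k<..<b k}"
proof -
  have a_le_b: "a i \<le> b j" for i j
  proof -
    have "a i \<le> a (max i j)" using \<open>incseq a\<close> by (simp add: incseq_def)
    also have "\<dots> < b (max i j)" by (fact assms(3))
    also have "\<dots> \<le> b j" using \<open>decseq b\<close> by (simp add: decseq_def)
    finally show ?thesis by simp
  qed
  define t where "t = (SUP k. a k)"
  have "a k \<le> t" for k
    unfolding t_def using a_le_b by (intro cSUP_upper bdd_aboveI) auto
  moreover have "t \<le> b k" for k
    unfolding t_def using a_le_b by (intro cSUP_least) auto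
  ultimately have "t \<in> {a k<..<b k}" for k
    using assms(4,5)[of k] by (meson greaterThanLessThan_iff le_less_trans less_le_trans)
  then show ?thesis by blast
qed

definition end_filter :: "real \<Rightarrow> real \<Rightarrow> bool \<Rightarrow> real filter" where
  "end_filter a b right = (if right then at_left b else at_right a)"

lemma eventually_in_end_filter: "a < b \<Longrightarrow> eventually (\<lambda>t. t \<in> {a<..<b}) (end_filter a b right)"
  by (auto simp: end_filter_def eventually_at_left_field eventually_at_right_field
      intro: exI[of _ a] exI[of _ b])

lemma end_filter_le_at: "end_filter a b right \<le> at (if right then b else a)"
  unfolding end_filter_def by (simp add: at_le)


lemma recurrence_inequality_linear_growth:
  fixes e a b c :: "nat \<Rightarrow> real"
  assumes e0: "e 0 = 0" and e1: "0 \<le> e 1"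
    and c_pos: "\<And>n. n \<ge> 1 \<Longrightarrow> 0 < c n"
    and c_le: "\<And>n. n \<ge> 1 \<Longrightarrow> c n \<le> b n" and a_le: "\<And>n. n \<ge> 1 \<Longrightarrow> a n \<le> b n"
    and rec: "\<And>n. n \<ge> 1 \<Longrightarrow> 0 \<le> e n \<Longrightarrow> 2 * b n * e n - a n * e (n - 1) \<le> c n * e (Suc n)"
  shows "real n * e 1 \<le> e n"
proof -
  have incr: "e 1 \<le> e (Suc k) - e k \<and> 0 \<le> e k" for k
  proof (induction k)
    case (Suc k)
    define n where "n = Suc k"
    have n: "n \<ge> 1" and IH: "e 1 \<le> e n - e k" "0 \<le> e k"
      using Suc.IH unfolding n_def by auto
    have "0 \<le> e n" using IH e1 by linarith
    have "c n * (e n - e k) \<le> b n * (e n - e k)"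
      using c_le[OF n] IH e1 by (intro mult_right_mono) auto
    also have "\<dots> \<le> b n * e n - a n * e k"
      using a_le[OF n] IH(2) by (simp add: algebra_simps mult_right_mono)
    also have "\<dots> \<le> c n * e (Suc n) - c n * e n"
      using rec[OF n \<open>0 \<le> e n\<close>] c_le[OF n] \<open>0 \<le> e n\<close> mult_right_mono[of "c n" "b n" "e n"]
      unfolding n_def by simp
    finally have "e n - e k \<le> e (Suc n) - e n"
      using c_pos[OF n] by (simp add: right_diff_distrib[symmetric])
    with IH \<open>0 \<le> e n\<close> show ?case unfolding n_def by simp
  qed (use e0 in simp)
  show ?thesis
  proof (induction n)
    case (Suc n)
    then show ?case using incr[of n] by (simp add: algebra_simps)
  qed (use e0 in simp)
qed

locale positive_recurrence =
  fixes l s0 s1 sm \<kappa> :: "nat \<Rightarrow> real" and x\<^sub>0 :: real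
  assumes l_pos: "\<And>n. n \<ge> 1 \<Longrightarrow> l n > 0"
    and s0_pos: "\<And>n. n \<ge> 1 \<Longrightarrow> s0 n > 0"
    and s1_pos: "\<And>n. n \<ge> 1 \<Longrightarrow> s1 n > 0"
    and sm_pos: "\<And>n. n \<ge> 1 \<Longrightarrow> sm n > 0"
    and sigma_le: "\<And>n. n \<ge> 1 \<Longrightarrow> max (sm n) (s1 n) \<le> s0 n"
    and kappa_nonneg: "\<And>n. n \<ge> 1 \<Longrightarrow> \<kappa> n \<ge> 0"
    and x\<^sub>0_cond: "sm 1 * x\<^sub>0 \<ge> - \<kappa> 1"
begin

definition positive_solution :: "(nat \<Rightarrow> real) \<Rightarrow> bool" where
  "positive_solution x \<longleftrightarrow> x 0 = x\<^sub>0 \<and>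
     (\<forall>n\<ge>1. l n = x n * (s1 n * x (n + 1) + s0 n * x n + sm n * x (n - 1)) + \<kappa> n * x n) \<and>
     (\<forall>n\<ge>1. x n > 0)"

text \<open>The recurrence solved for its last term, started at \<open>x\<^sub>1 = t\<close>; it describes the
  solution only as long as no term vanishes (division by zero yields \<open>0\<close>).\<close>

fun traj :: "real \<Rightarrow> nat \<Rightarrow> real" where
  "traj t 0 = x\<^sub>0"
| "traj t (Suc 0) = t"
| "traj t (Suc (Suc n)) =
     (l (Suc n) / traj t (Suc n) - \<kappa> (Suc n) - s0 (Suc n) * traj t (Suc n) - sm (Suc n) * traj t n)
       / s1 (Suc n)"

lemma traj_Suc:
  "n \<ge> 1 \<Longrightarrow> traj t (Suc n) = (l n / traj t n - \<kappa> n - s0 n * traj t n - sm n * traj t (n - 1)) / s1 n"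
  by (cases n) auto

lemma traj_solves:
  assumes "n \<ge> 1" "traj t n \<noteq> 0"
  shows "l n = traj t n * (s1 n * traj t (n + 1) + s0 n * traj t n + sm n * traj t (n - 1)) + \<kappa> n * traj t n"
  using assms s1_pos[OF assms(1)] by (simp add: traj_Suc field_simps)

lemma isCont_traj: "(\<And>k. 1 \<le> k \<Longrightarrow> k < n \<Longrightarrow> traj t k \<noteq> 0) \<Longrightarrow> isCont (\<lambda>t. traj t n) t"
proof (induction t n rule: traj.induct)
  case (3 t n)
  then show ?case
    using s1_pos[of "Suc n"] by (auto intro!: continuous_intros)
qed auto

lemma traj_tendsto_at_top:
  assumes n: "n \<ge> 1" and to_0: "((\<lambda>t. traj t n) \<longlongrightarrow> 0) F"
    and pos: "eventually (\<lambda>t. traj t n > 0) F" and prev: "((\<lambda>t. traj t (n - 1)) \<longlongrightarrow> c) F"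
  shows "filterlim (\<lambda>t. traj t (n + 1)) at_top F"
proof -
  have eq: "(\<lambda>t. traj t (n + 1)) = (\<lambda>t. inverse (s1 n) *
      ((- \<kappa> n - s0 n * traj t n - sm n * traj t (n - 1)) + l n * inverse (traj t n)))"
    using traj_Suc[OF n] by (auto simp: divide_inverse algebra_simps)
  have "filterlim (\<lambda>t. l n * inverse (traj t n)) at_top F"
    using l_pos[OF n] to_0 pos
    by (auto intro!: filterlim_tendsto_pos_mult_at_top[OF tendsto_const] filterlim_inverse_at_top)
  moreover have "((\<lambda>t. - \<kappa> n - s0 n * traj t n - sm n * traj t (n - 1))
      \<longlongrightarrow> - \<kappa> n - s0 n * 0 - sm n * c) F"
    by (intro tendsto_intros to_0 prev)
  ultimately have "filterlim (\<lambda>t. (- \<kappa> n - s0 n * traj t n - sm n * traj t (n - 1))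
      + l n * inverse (traj t n)) at_top F"
    by (rule filterlim_tendsto_add_at_top[rotated])
  then show ?thesis
    unfolding eq using s1_pos[OF n] by (auto intro: filterlim_tendsto_pos_mult_at_top[OF tendsto_const])
qed

lemma traj_eventually_neg:
  assumes n: "n \<ge> 1" and prev: "((\<lambda>t. traj t (n - 1)) \<longlongrightarrow> c) F"
    and top: "filterlim (\<lambda>t. traj t n) at_top F"
  shows "eventually (\<lambda>t. traj t (n + 1) < 0) F"
proof -
  have eq: "(\<lambda>t. traj t (n + 1)) = (\<lambda>t. inverse (s1 n) *
      ((- \<kappa> n - sm n * traj t (n - 1) + l n * inverse (traj t n)) + - (s0 n * traj t n)))"
    using traj_Suc[OF n] by (auto simp: divide_inverse algebra_simps)
  have "((\<lambda>t. - \<kappa> n - sm n * traj t (n - 1) + l n * inverse (traj t n))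
      \<longlongrightarrow> - \<kappa> n - sm n * c + l n * 0) F"
    by (intro tendsto_intros tendsto_inverse_0_at_top top prev)
  moreover have "filterlim (\<lambda>t. - (s0 n * traj t n)) at_bot F"
    unfolding filterlim_uminus_at_bot minus_minus using s0_pos[OF n]
    by (auto intro: filterlim_tendsto_pos_mult_at_top[OF tendsto_const _ top])
  ultimately have "filterlim (\<lambda>t. (- \<kappa> n - sm n * traj t (n - 1) + l n * inverse (traj t n))
      + - (s0 n * traj t n)) at_bot F"
    by (rule filterlim_tendsto_add_at_bot_iff[THEN iffD2])
  then have "filterlim (\<lambda>t. traj t (n + 1)) at_bot F"
    unfolding eq using s1_pos[OF n] by (auto intro: filterlim_tendsto_pos_mult_at_bot[OF tendsto_const])
  then have "eventually (\<lambda>t. traj t (n + 1) \<le> -1) F"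
    unfolding filterlim_at_bot by auto
  then show ?thesis by eventually_elim auto
qed

definition positive_upto :: "nat \<Rightarrow> real \<Rightarrow> bool" where
  "positive_upto n t \<longleftrightarrow> (\<forall>k\<in>{1..n}. traj t k > 0)"

lemma isCont_traj_positive_upto:
  assumes "positive_upto n t" "m \<le> Suc n"
  shows "isCont (\<lambda>t. traj t m) t"
proof (rule isCont_traj)
  fix k assume "1 \<le> k" "k < m"
  with assms show "traj t k \<noteq> 0"
    unfolding positive_upto_def by (metis atLeastAtMost_iff less_Suc_eq_le order.strict_trans2 less_irrefl)
qed

definition shooting_interval :: "nat \<Rightarrow> real \<Rightarrow> real \<Rightarrow> bool \<Rightarrow> bool" where
  "shooting_interval n a b right \<longleftrightarrow> 1 \<le> n \<and> a < b \<and> (\<forall>t\<in>{a<..<b}. positive_upto n t) \<and>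
     ((\<lambda>t. traj t n) \<longlongrightarrow> 0) (end_filter a b right) \<and>
     (\<exists>c. ((\<lambda>t. traj t (n - 1)) \<longlongrightarrow> c) (end_filter a b right)) \<and>
     eventually (\<lambda>t. traj t (n + 1) < 0) (end_filter a b (\<not> right))"

lemma shooting_interval_1: "\<exists>b. shooting_interval 1 0 b False"
proof -
  have "eventually (\<lambda>t. traj t 2 < 0) at_top"
    using traj_eventually_neg[of 1 "x\<^sub>0" at_top] by (simp add: filterlim_ident numeral_2_eq_2)
  then obtain M where M: "\<And>t. t \<ge> M \<Longrightarrow> traj t 2 < 0"
    unfolding eventually_at_top_linorder by blast
  define b where "b = max M 0 + 1"
  have "eventually (\<lambda>t. traj t 2 < 0) (at_left b)"
    unfolding eventually_at_left_field b_def using M by (intro exI[of _ "max M 0"]) auto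
  then have "shooting_interval 1 0 b False"
    unfolding shooting_interval_def end_filter_def positive_upto_def b_def
    by (auto simp: tendsto_ident_at numeral_2_eq_2)
  then show ?thesis ..
qed

lemma shooting_interval_tendsto_at_top:
  assumes "shooting_interval n a b right"
  shows "filterlim (\<lambda>t. traj t (Suc n)) at_top (end_filter a b right)"
proof -
  have n: "n \<ge> 1" and ab: "a < b" and pos: "\<And>t. t \<in> {a<..<b} \<Longrightarrow> positive_upto n t"
    and to_0: "((\<lambda>t. traj t n) \<longlongrightarrow> 0) (end_filter a b right)"
    using assms unfolding shooting_interval_def by auto
  obtain c where "((\<lambda>t. traj t (n - 1)) \<longlongrightarrow> c) (end_filter a b right)"
    using assms unfolding shooting_interval_def by auto
  moreover have "eventually (\<lambda>t. traj t n > 0) (end_filter a b right)"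
    using eventually_in_end_filter[OF ab] by eventually_elim (use pos n in \<open>auto simp: positive_upto_def\<close>)
  ultimately show ?thesis
    using traj_tendsto_at_top[OF n to_0] by simp
qed

lemma shooting_interval_SucI:
  assumes I: "shooting_interval n a b right"
    and z: "z \<in> {a<..<b}" "traj z (Suc n) = 0"
    and pos': "\<And>t. t \<in> {a'<..<b'} \<Longrightarrow> traj t (Suc n) > 0"
    and a'b': "if right then a' = z \<and> b' = b else a' = a \<and> b' = z"
  shows "shooting_interval (Suc n) a' b' (\<not> right)"
proof -
  have n: "n \<ge> 1" and pos: "\<And>t. t \<in> {a<..<b} \<Longrightarrow> positive_upto n t"
    and to_0: "((\<lambda>t. traj t n) \<longlongrightarrow> 0) (end_filter a b right)"
    using I unfolding shooting_interval_def by auto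
  have sub: "{a'<..<b'} \<subseteq> {a<..<b}" "a' < b'"
    using z(1) a'b' by (auto split: if_splits)
  have "isCont (\<lambda>t. traj t m) z" if "m \<le> Suc n" for m
    using isCont_traj_positive_upto pos z(1) that by blast
  moreover have "end_filter a' b' (\<not> right) \<le> at z"
    using end_filter_le_at[of a' b' "\<not> right"] a'b' by (auto split: if_splits)
  ultimately have to_z: "((\<lambda>t. traj t m) \<longlongrightarrow> traj z m) (end_filter a' b' (\<not> right))"
    if "m \<le> Suc n" for m
    using that by (auto simp: isCont_def intro: tendsto_mono)
  have "\<forall>t\<in>{a'<..<b'}. positive_upto (Suc n) t"
  proof
    fix t assume t: "t \<in> {a'<..<b'}"
    with sub(1) have "positive_upto n t" using pos by blast
    with pos'[OF t] show "positive_upto (Suc n) t"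
      by (auto simp: positive_upto_def le_Suc_eq)
  qed
  moreover have "((\<lambda>t. traj t (Suc n)) \<longlongrightarrow> 0) (end_filter a' b' (\<not> right))"
    using to_z[of "Suc n"] z(2) by simp
  moreover have "((\<lambda>t. traj t (Suc n - 1)) \<longlongrightarrow> traj z n) (end_filter a' b' (\<not> right))"
    using to_z[of n] by simp
  moreover have "eventually (\<lambda>t. traj t (Suc n + 1) < 0) (end_filter a' b' (\<not> \<not> right))"
    using traj_eventually_neg[of "Suc n" 0, OF _ _ shooting_interval_tendsto_at_top[OF I]] to_0 a'b'
    by (auto simp: end_filter_def split: if_splits)
  ultimately show ?thesis
    using sub(2) unfolding shooting_interval_def by (intro conjI exI) auto
qed

lemma shooting_interval_Suc:
  assumes I: "shooting_interval n a b right"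
  shows "\<exists>a' b'. shooting_interval (Suc n) a' b' (\<not> right) \<and>
    (if right then a < a' \<and> b' = b else a' = a \<and> b' < b)"
proof -
  have ab: "a < b" and pos: "\<And>t. t \<in> {a<..<b} \<Longrightarrow> positive_upto n t"
    and neg: "eventually (\<lambda>t. traj t (Suc n) < 0) (end_filter a b (\<not> right))"
    using I unfolding shooting_interval_def by auto
  have pos_end: "eventually (\<lambda>t. traj t (Suc n) > 0) (end_filter a b right)"
    using shooting_interval_tendsto_at_top[OF I] by (rule filterlim_at_top_dense[THEN iffD1, rule_format])
  have cont: "continuous_on {a<..<b} (\<lambda>t. traj t (Suc n))"
    using pos by (intro continuous_at_imp_continuous_on ballI isCont_traj_positive_upto[of n]) auto
  show ?thesis
  proof (cases right)
    case True
    with neg pos_end obtain z where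
      "z \<in> {a<..<b}" "traj z (Suc n) = 0" "\<forall>t\<in>{z<..<b}. traj t (Suc n) > 0"
      using last_zero_right[OF ab cont] by (auto simp: end_filter_def)
    with True have "shooting_interval (Suc n) z b False"
      using shooting_interval_SucI[OF I, of z z b] by auto
    with True \<open>z \<in> {a<..<b}\<close> show ?thesis by auto
  next
    case False
    with neg pos_end obtain z where
      "z \<in> {a<..<b}" "traj z (Suc n) = 0" "\<forall>t\<in>{a<..<z}. traj t (Suc n) > 0"
      using first_zero_left[OF ab cont] by (auto simp: end_filter_def)
    with False have "shooting_interval (Suc n) a z True"
      using shooting_interval_SucI[OF I, of z a z] by auto
    with False \<open>z \<in> {a<..<b}\<close> show ?thesis by auto
  qed
qed

lemma shooting_interval_sequence:
  obtains a b :: "nat \<Rightarrow> real"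
  where "\<And>k. shooting_interval (Suc k) (a k) (b k) (odd k)"
    and "\<And>k. if odd k then a k < a (Suc k) \<and> b (Suc k) = b k else a (Suc k) = a k \<and> b (Suc k) < b k"
proof -
  have "\<exists>ab. \<forall>k. shooting_interval (Suc k) (fst (ab k)) (snd (ab k)) (odd k) \<and>
      (if odd k then fst (ab k) < fst (ab (Suc k)) \<and> snd (ab (Suc k)) = snd (ab k)
       else fst (ab (Suc k)) = fst (ab k) \<and> snd (ab (Suc k)) < snd (ab k))"
  proof (rule dependent_nat_choice)
    show "\<exists>ab. shooting_interval (Suc 0) (fst ab) (snd ab) (odd 0)"
      using shooting_interval_1 by auto
  next
    fix ab :: "real \<times> real" and k
    assume "shooting_interval (Suc k) (fst ab) (snd ab) (odd k)"
    then obtain a' b' where "shooting_interval (Suc (Suc k)) a' b' (odd (Suc k))"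
      "if odd k then fst ab < a' \<and> b' = snd ab else a' = fst ab \<and> b' < snd ab"
      using shooting_interval_Suc by fastforce
    then show "\<exists>ab'. shooting_interval (Suc (Suc k)) (fst ab') (snd ab') (odd (Suc k)) \<and>
        (if odd k then fst ab < fst ab' \<and> snd ab' = snd ab else fst ab' = fst ab \<and> snd ab' < snd ab)"
      by (intro exI[of _ "(a', b')"]) simp
  qed
  then obtain ab where "\<forall>k. shooting_interval (Suc k) (fst (ab k)) (snd (ab k)) (odd k) \<and>
      (if odd k then fst (ab k) < fst (ab (Suc k)) \<and> snd (ab (Suc k)) = snd (ab k)
       else fst (ab (Suc k)) = fst (ab k) \<and> snd (ab (Suc k)) < snd (ab k))" ..
  then show ?thesis
    by (intro that[of "\<lambda>k. fst (ab k)" "\<lambda>k. snd (ab k)"]) auto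
qed

lemma positive_solution_exists: "\<exists>t. positive_solution (traj t)"
proof -
  obtain a b where ab: "\<And>k. shooting_interval (Suc k) (a k) (b k) (odd k)"
    and shrink: "\<And>k. if odd k then a k < a (Suc k) \<and> b (Suc k) = b k else a (Suc k) = a k \<and> b (Suc k) < b k"
    by (rule shooting_interval_sequence) blast
  have "a k \<le> a (Suc k)" "b (Suc k) \<le> b k" "a k < a (Suc (Suc k))" "b (Suc (Suc k)) < b k" for k
    using shrink[of k] shrink[of "Suc k"] by (auto split: if_splits)
  moreover have "a k < b k" for k
    using ab[of k] unfolding shooting_interval_def by auto
  ultimately obtain t where t: "\<And>k. t \<in> {a k<..<b k}"
    using nested_intervals_strict[of a b] by (auto intro: incseq_SucI decseq_SucI)
  have "traj t n > 0" if "n \<ge> 1" for n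
    using ab[of "n - 1"] t[of "n - 1"] that unfolding shooting_interval_def positive_upto_def by auto
  then have "positive_solution (traj t)"
    unfolding positive_solution_def using traj_solves by (auto simp: less_imp_neq[symmetric])
  then show ?thesis ..
qed

lemma positive_solution_sq_le:
  assumes x: "positive_solution x" and n: "n \<ge> 1"
  shows "s0 n * (x n)\<^sup>2 \<le> l n"
proof -
  have "0 \<le> sm n * x (n - 1) + \<kappa> n"
  proof (cases "n = 1")
    case True
    then show ?thesis using x x\<^sub>0_cond by (simp add: positive_solution_def)
  next
    case False
    then have "0 < x (n - 1)"
      using x n by (simp add: positive_solution_def)
    then show ?thesis
      using sm_pos[OF n] kappa_nonneg[OF n] by (simp add: add_nonneg_nonneg)
  qed
  moreover have "0 < s1 n * x (n + 1)" "0 < x n"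
    using x n s1_pos[OF n] by (simp_all add: positive_solution_def)
  ultimately have "0 \<le> x n * (s1 n * x (n + 1) + (sm n * x (n - 1) + \<kappa> n))"
    by simp
  also have "\<dots> = l n - s0 n * (x n)\<^sup>2"
    using x n by (simp add: positive_solution_def power2_eq_square algebra_simps)
  finally show ?thesis by simp
qed

lemma positive_solution_max_sq_le:
  assumes "positive_solution x" "positive_solution y" "n \<ge> 1"
  shows "s0 n * (max (x n) (y n))\<^sup>2 \<le> l n"
  using positive_solution_sq_le[OF assms(1,3)] positive_solution_sq_le[OF assms(2,3)]
  by (simp add: max_def)

lemma positive_solution_alternating_gap:
  fixes x y :: "nat \<Rightarrow> real"
  defines "e \<equiv> \<lambda>k. (-1) ^ (k + 1) * (y k - x k)"
  assumes x: "positive_solution x" and y: "positive_solution y"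
    and n: "n \<ge> 1" and e_n: "0 \<le> e n"
  shows "2 * s0 n * e n - sm n * e (n - 1) \<le> s1 n * e (Suc n)"
proof -
  define P where "P = x n * y n"
  have P_pos: "0 < P"
    using x y n unfolding P_def positive_solution_def by simp
  have "P \<le> (max (x n) (y n))\<^sup>2"
    using x y n unfolding P_def positive_solution_def power2_eq_square
    by (cases "x n \<le> y n") (auto intro: mult_mono)
  then have "s0 n * P \<le> s0 n * (max (x n) (y n))\<^sup>2"
    using s0_pos[OF n] by simp
  also have "\<dots> \<le> l n"
    by (rule positive_solution_max_sq_le[OF x y n])
  finally have P_le: "s0 n * P \<le> l n" .
  have "l n = x n * (s1 n * x (n + 1) + s0 n * x n + sm n * x (n - 1)) + \<kappa> n * x n"
    "l n = y n * (s1 n * y (n + 1) + s0 n * y n + sm n * y (n - 1)) + \<kappa> n * y n"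
    using x y n unfolding positive_solution_def by blast+
  then have diff: "- l n * (y n - x n) =
      P * (s1 n * (y (n + 1) - x (n + 1)) + s0 n * (y n - x n) + sm n * (y (n - 1) - x (n - 1)))"
    unfolding P_def by algebra
  define \<epsilon> :: real where "\<epsilon> = (-1) ^ n"
  have "e (Suc n) = \<epsilon> * (y (n + 1) - x (n + 1))" "e n = - \<epsilon> * (y n - x n)"
    "e (n - 1) = \<epsilon> * (y (n - 1) - x (n - 1))"
    using n unfolding e_def \<epsilon>_def by (auto simp: power_eq_if)
  with diff have "P * s1 n * e (Suc n) = (l n + P * s0 n) * e n - P * sm n * e (n - 1)"
    by algebra
  also have "\<dots> \<ge> P * (2 * s0 n * e n - sm n * e (n - 1))"
    using mult_right_mono[OF P_le e_n] by (simp add: algebra_simps)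
  finally show ?thesis
    using P_pos by (simp add: mult.assoc)
qed

lemma positive_solution_gap_le:
  assumes x: "positive_solution x" and y: "positive_solution y" and n: "n \<ge> 1"
  shows "(y 1 - x 1)\<^sup>2 \<le> l n / ((real n)\<^sup>2 * s0 n)"
proof -
  have gap: "(y 1 - x 1)\<^sup>2 \<le> l n / ((real n)\<^sup>2 * s0 n)" if x: "positive_solution x" and y: "positive_solution y"
    and le: "x 1 \<le> y 1" for x y
  proof -
    define e where "e k = (-1) ^ (k + 1) * (y k - x k)" for k
    have "real n * e 1 \<le> e n"
    proof (rule recurrence_inequality_linear_growth[where a = sm and b = s0 and c = s1])
      show "e 0 = 0" using x y by (simp add: e_def positive_solution_def)
      show "0 \<le> e 1" using le by (simp add: e_def)
      show "\<And>k. k \<ge> 1 \<Longrightarrow> 0 < s1 k" by (rule s1_pos)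
      show "\<And>k. k \<ge> 1 \<Longrightarrow> s1 k \<le> s0 k" "\<And>k. k \<ge> 1 \<Longrightarrow> sm k \<le> s0 k"
        using sigma_le by force+
      show "\<And>k. k \<ge> 1 \<Longrightarrow> 0 \<le> e k \<Longrightarrow> 2 * s0 k * e k - sm k * e (k - 1) \<le> s1 k * e (Suc k)"
        using positive_solution_alternating_gap[OF x y] unfolding e_def by blast
    qed
    also have "e n \<le> \<bar>y n - x n\<bar>"
      using abs_ge_self[of "e n"] unfolding e_def abs_mult power_abs by simp
    finally have "(real n * (y 1 - x 1))\<^sup>2 \<le> (y n - x n)\<^sup>2"
      using le unfolding e_def abs_le_square_iff[symmetric] by simp
    also have "\<dots> \<le> (max (x n) (y n))\<^sup>2"
      using x y n unfolding positive_solution_def abs_le_square_iff[symmetric]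
      by (auto simp: abs_if max_def)
    finally have "s0 n * (real n * (y 1 - x 1))\<^sup>2 \<le> s0 n * (max (x n) (y n))\<^sup>2"
      using s0_pos[OF n] by simp
    also have "\<dots> \<le> l n"
      by (rule positive_solution_max_sq_le[OF x y n])
    finally show ?thesis
      using s0_pos[OF n] n by (simp add: pos_le_divide_eq power_mult_distrib mult_ac)
  qed
  show ?thesis
    using gap[OF x y] gap[OF y x] by (metis nle_le power2_commute)
qed

lemma positive_solution_unique:
  assumes liminf_0: "liminf (\<lambda>n. ereal (l n / ((real n)\<^sup>2 * s0 n))) = 0"
    and x: "positive_solution x" and y: "positive_solution y"
  shows "x 1 = y 1"
proof -
  have "ereal ((y 1 - x 1)\<^sup>2) \<le> liminf (\<lambda>n. ereal (l n / ((real n)\<^sup>2 * s0 n)))"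
    using positive_solution_gap_le[OF x y]
    by (intro Liminf_bounded) (auto simp: eventually_sequentially)
  then show ?thesis
    using liminf_0 by simp
qed

end

theorem corollary5p7:
  fixes l s0 s1 sm \<kappa> :: "nat \<Rightarrow> real" and x0 :: real
  assumes l_pos: "\<And>n. n \<ge> 1 \<Longrightarrow> l n > 0"
    and s0_pos: "\<And>n. n \<ge> 1 \<Longrightarrow> s0 n > 0"
    and s1_pos: "\<And>n. n \<ge> 1 \<Longrightarrow> s1 n > 0"
    and sm_pos: "\<And>n. n \<ge> 1 \<Longrightarrow> sm n > 0"
    and sigma_le: "\<And>n. n \<ge> 1 \<Longrightarrow> max (sm n) (s1 n) \<le> s0 n"
    and kappa_nonneg: "\<And>n. n \<ge> 1 \<Longrightarrow> \<kappa> n \<ge> 0"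
    and liminf0: "liminf (\<lambda>n. ereal (l n / ((real n)\<^sup>2 * s0 n))) = 0"
    and x0_cond: "sm 1 * x0 \<ge> - \<kappa> 1"
  shows "\<exists>!x1::real. x1 > 0 \<and>
           (\<exists>x :: nat \<Rightarrow> real. x 0 = x0 \<and> x 1 = x1 \<and>
              (\<forall>n\<ge>1. l n = x n * (s1 n * x (n + 1) + s0 n * x n + sm n * x (n - 1)) + \<kappa> n * x n) \<and>
              (\<forall>n\<ge>1. x n > 0))"
proof -
  interpret positive_recurrence l s0 s1 sm \<kappa> x0
    using assms by unfold_locales auto
  obtain t where t: "positive_solution (traj t)"
    using positive_solution_exists ..
  show ?thesis
  proof (rule ex1I)
    show "t > 0 \<and> (\<exists>x. x 0 = x0 \<and> x 1 = t \<and>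
        (\<forall>n\<ge>1. l n = x n * (s1 n * x (n + 1) + s0 n * x n + sm n * x (n - 1)) + \<kappa> n * x n) \<and>
        (\<forall>n\<ge>1. x n > 0))"
      using t unfolding positive_solution_def by (intro conjI exI[of _ "traj t"]) auto
  next
    fix x1 assume "x1 > 0 \<and> (\<exists>x. x 0 = x0 \<and> x 1 = x1 \<and>
        (\<forall>n\<ge>1. l n = x n * (s1 n * x (n + 1) + s0 n * x n + sm n * x (n - 1)) + \<kappa> n * x n) \<and>
        (\<forall>n\<ge>1. x n > 0))"
    then obtain x where "positive_solution x" "x 1 = x1"
      unfolding positive_solution_def by blast
    then show "x1 = t"
      using positive_solution_unique[OF liminf0 _ t] by simp
  qed
qed

end
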